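(* Let $F$ be a commutative field, $\Sigma=\mathrm{PG}(n,F)$, $1\le h\le n-1$, and let $K$ be a linear complex of $h$-subspaces of $\Sigma$. Let $U\subseteq W$ be subspaces of $\Sigma$ with $\dim U\le h-1$ and $\dim W\ge h+1$, and put $K(U,W):=K\cap[U,W]_h$ (the elements of $K$ containing $U$ and contained in $W$). If $[U,W]_h\not\subseteq K$, then $K(U,W)$ is a linear complex of $(h-1-\dim U)$-subspaces in the projective space $[U,W]$.
   Context: A $d$-subspace is a projective subspace of dimension $d$; $[U,W]$ denotes the set of subspaces $X$ with $U\subseteq X\subseteq W$, and $[U,W]_d$ its members of dimension $d$. With $\dim U=k-1$, $[U,W]$ is a projective space isomorphic to $\mathrm{PG}(\dim W-k,F)$, whose $d$-dimensional subspaces are the $(k+d)$-subspaces of $\Sigma$ in $[U,W]$. Linear complex: let $N=\binom{n+1}{h+1}-1$ and let $\wp_{n,h}$ be the Plücker embedding sending the $h$-subspace spanned by linearly independent $v_0,\dots,v_h\in F^{n+1}$ to the point $F(v_0\wedge\cdots\wedge v_h)$ of $\mathrm{PG}(N,F)=\mathbb P(\bigwedge^{h+1}F^{n+1})$; its image is the Grassmann variety $\mathcal G_{n,h}$. A linear complex of $h$-subspaces is a set of the form $(H\cap\mathcal G_{n,h})^{\wp_{n,h}^{-1}}$ for a hyperplane $H$ of $\mathrm{PG}(N,F)$, i.e. the set of $h$-subspaces whose Plücker image lies in $H$. Linear complexes in the projective space $[U,W]$ are defined in the same way via an identification of $[U,W]$ with $\mathrm{PG}(\dim W-\dim U-1,F)$.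 *)

theory Defs
  imports "HOL-Combinatorics.Permutations"
begin

text \<open>Vectors of F^(n+1) are functions nat => F supported on {0..n}.
  A projective d-subspace of PG(n,F) is identified with its underlying
  (d+1)-dimensional vector subspace of F^(n+1).\<close>

definition vecs :: "nat \<Rightarrow> (nat \<Rightarrow> 'a::field) set" where
  "vecs n = {v. \<forall>i. n < i \<longrightarrow> v i = 0}"

definition lin_comb :: "(nat \<Rightarrow> 'a::field) list \<Rightarrow> (nat \<Rightarrow> 'a) \<Rightarrow> (nat \<Rightarrow> 'a)" where
  "lin_comb vs cs = (\<lambda>i. \<Sum>j<length vs. cs j * (vs ! j) i)"

definition span_l :: "(nat \<Rightarrow> 'a::field) list \<Rightarrow> (nat \<Rightarrow> 'a) set" where
  "span_l vs = {lin_comb vs cs | cs. True}"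

definition indep :: "(nat \<Rightarrow> 'a::field) list \<Rightarrow> bool" where
  "indep vs \<longleftrightarrow> (\<forall>cs. lin_comb vs cs = (\<lambda>_. 0) \<longrightarrow> (\<forall>j<length vs. cs j = 0))"

definition is_basis :: "nat \<Rightarrow> (nat \<Rightarrow> 'a::field) list \<Rightarrow> (nat \<Rightarrow> 'a) set \<Rightarrow> bool" where
  "is_basis n vs X \<longleftrightarrow> set vs \<subseteq> vecs n \<and> indep vs \<and> X = span_l vs"

text \<open>X is a projective d-subspace of PG(n,F) (d = -1 gives the empty subspace {0})\<close>
definition psub :: "nat \<Rightarrow> int \<Rightarrow> (nat \<Rightarrow> 'a::field) set \<Rightarrow> bool" where
  "psub n d X \<longleftrightarrow> d \<ge> -1 \<and> (\<exists>vs. length vs = nat (d + 1) \<and> is_basis n vs X)"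

definition det_l :: "nat \<Rightarrow> (nat \<Rightarrow> nat \<Rightarrow> 'a::field) \<Rightarrow> 'a" where
  "det_l k M = (\<Sum>p\<in>{p. p permutes {..<k}}. of_int (sign p) * (\<Prod>i<k. M i (p i)))"

text \<open>Pluecker coordinate of v_0 wedge ... wedge v_h at the basis vector e_S,
  S an (h+1)-subset of {0..n}: the corresponding maximal minor.\<close>
definition plucker_coord :: "(nat \<Rightarrow> 'a::field) list \<Rightarrow> nat set \<Rightarrow> 'a" where
  "plucker_coord vs S = det_l (length vs) (\<lambda>i j. (vs ! i) (sorted_list_of_set S ! j))"

text \<open>Linear complex of h-subspaces of PG(n,F): the h-subspaces whose Pluecker image
  lies in the hyperplane sum_S c S * x_S = 0 of PG(N,F), c nonzero.\<close>
definition linear_complex :: "nat \<Rightarrow> nat \<Rightarrow> (nat \<Rightarrow> 'a::field) set set \<Rightarrow> bool" where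
  "linear_complex n h K \<longleftrightarrow>
     (\<exists>c :: nat set \<Rightarrow> 'a.
        (\<exists>S. S \<subseteq> {..n} \<and> card S = h + 1 \<and> c S \<noteq> 0) \<and>
        K = {X. psub n (int h) X \<and>
                (\<exists>vs. length vs = h + 1 \<and> is_basis n vs X \<and>
                   (\<Sum>S\<in>{S. S \<subseteq> {..n} \<and> card S = h + 1}. c S * plucker_coord vs S) = 0)})"

definition interval :: "nat \<Rightarrow> int \<Rightarrow> (nat \<Rightarrow> 'a::field) set \<Rightarrow> (nat \<Rightarrow> 'a) set \<Rightarrow> (nat \<Rightarrow> 'a) set set" where
  "interval n d U W = {X. psub n d X \<and> U \<subseteq> X \<and> X \<subseteq> W}"

text \<open>Identification of [U,W] with PG(m,F), m = length bs - 1: bs extends a basis of U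
  to a basis of W; a subspace Y of F^(m+1) corresponds to U + phi(Y), phi(y) = sum y_j bs_j.\<close>
definition ident_ok :: "nat \<Rightarrow> (nat \<Rightarrow> 'a::field) set \<Rightarrow> (nat \<Rightarrow> 'a) set \<Rightarrow> (nat \<Rightarrow> 'a) list \<Rightarrow> bool" where
  "ident_ok n U W bs \<longleftrightarrow> bs \<noteq> [] \<and>
     (\<exists>us. is_basis n us U \<and> is_basis n (us @ bs) W)"

definition lift :: "(nat \<Rightarrow> 'a::field) set \<Rightarrow> (nat \<Rightarrow> 'a) list \<Rightarrow> (nat \<Rightarrow> 'a) set \<Rightarrow> (nat \<Rightarrow> 'a) set" where
  "lift U bs Y = {(\<lambda>i. u i + lin_comb bs y i) | u y. u \<in> U \<and> y \<in> Y}"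

text \<open>S is a linear complex of d-subspaces in the projective space [U,W]:
  under (every) identification of [U,W] with PG(m,F), S is the image of a linear complex.\<close>
definition linear_complex_in :: "nat \<Rightarrow> (nat \<Rightarrow> 'a::field) set \<Rightarrow> (nat \<Rightarrow> 'a) set \<Rightarrow> nat \<Rightarrow> (nat \<Rightarrow> 'a) set set \<Rightarrow> bool" where
  "linear_complex_in n U W d S \<longleftrightarrow>
     (\<forall>bs. ident_ok n U W bs \<longrightarrow>
        (\<exists>L. linear_complex (length bs - 1) d L \<and> S = lift U bs ` L))"

end

theory Submission
  imports Defs "Jordan_Normal_Form.Determinant" "HOL-Library.Function_Algebras"
begin

text \<open>Fix an identification of [U,W] with PG(m,F), i.e. a basis us of U extended by bs to a basis
  of W. Every h-subspace X between U and W is U + phi(Y) for a (h-1-dim U)-subspace Y of PG(m,F),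
  and if ys is a basis of Y then phi(ys) @ us is a basis of X. Expanding the maximal minors of
  phi(ys) @ us multilinearly in the rows phi(ys) (a Cauchy--Binet argument) gives
  p_S(phi(ys) @ us) = sum_T p_T(ys) * p_S(bs_T @ us). So the hyperplane sum_S c_S p_S = 0 defining K
  pulls back to the hyperplane sum_T c'_T p_T = 0 with c'_T = sum_S c_S p_S(bs_T @ us). If c' were
  zero, every element of [U,W]_h would lie in K.\<close>

lemma sum_lessThan_add: "(\<Sum>j<(a::nat)+b. f j) = (\<Sum>j<a. f j) + (\<Sum>j<b. f (j + a)::'a::comm_monoid_add)"
proof -
  have "(\<Sum>j<a+b. f j) = sum f {0..<a} + sum f {a..<a+b}"
    by (simp add: atLeast0LessThan[symmetric] sum.atLeastLessThan_concat)
  also have "sum f {a..<a+b} = (\<Sum>j<b. f (j + a))"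
    using sum.shift_bounds_nat_ivl[of f 0 a b] by (simp add: atLeast0LessThan add.commute)
  finally show ?thesis by (simp add: atLeast0LessThan)
qed

lemma lin_comb_append:
  "lin_comb (xs @ ys) cs = (\<lambda>i. lin_comb xs cs i + lin_comb ys (\<lambda>j. cs (j + length xs)) i)"
proof (rule ext)
  fix i
  have "lin_comb (xs @ ys) cs i = (\<Sum>j<length xs + length ys. cs j * ((xs@ys)!j) i)"
    by (simp add: lin_comb_def)
  also have "\<dots> = (\<Sum>j<length xs. cs j * ((xs@ys)!j) i) + (\<Sum>j<length ys. cs (j + length xs) * ((xs@ys)!(j + length xs)) i)"
    by (rule sum_lessThan_add)
  also have "\<dots> = lin_comb xs cs i + lin_comb ys (\<lambda>j. cs (j + length xs)) i"
    unfolding lin_comb_def by (simp add: nth_append)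
  finally show "lin_comb (xs @ ys) cs i = lin_comb xs cs i + lin_comb ys (\<lambda>j. cs (j + length xs)) i" .
qed

lemma lin_comb_cong:
  assumes "\<And>j. j < length vs \<Longrightarrow> cs j = ds j"
  shows "lin_comb vs cs = lin_comb vs ds"
  unfolding lin_comb_def using assms by (auto intro!: sum.cong)

lemma lin_comb_append_join:
  "lin_comb (us @ bs) (\<lambda>j. if j < length us then a j else y (j - length us))
     = (\<lambda>i. lin_comb us a i + lin_comb bs y i)"
proof -
  have "lin_comb us (\<lambda>j. if j < length us then a j else y (j - length us)) = lin_comb us a"
    by (rule lin_comb_cong) simp
  moreover have "lin_comb bs (\<lambda>j. if j + length us < length us then a (j + length us)
      else y (j + length us - length us)) = lin_comb bs y"
    by (rule lin_comb_cong) simp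
  ultimately show ?thesis unfolding lin_comb_append by simp
qed

lemma lin_comb_add: "lin_comb vs (\<lambda>j. a j + b j) = (\<lambda>i. lin_comb vs a i + lin_comb vs b i)"
  unfolding lin_comb_def by (auto simp: fun_eq_iff algebra_simps sum.distrib)

lemma lin_comb_diff: "lin_comb vs (\<lambda>j. a j - b j) = (\<lambda>i. lin_comb vs a i - lin_comb vs b i)"
  unfolding lin_comb_def by (auto simp: fun_eq_iff algebra_simps sum_subtractf)

lemma lin_comb_scale: "lin_comb vs (\<lambda>j. c * a j) = (\<lambda>i. c * lin_comb vs a i)"
  unfolding lin_comb_def by (auto simp: fun_eq_iff algebra_simps sum_distrib_left)

lemma lin_comb_zero: "lin_comb vs (\<lambda>_. 0) = (\<lambda>_. 0)"
  unfolding lin_comb_def by auto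

lemma lin_comb_map_lin_comb: "lin_comb (map (lin_comb bs) ys) cs = lin_comb bs (lin_comb ys cs)"
proof (rule ext)
  fix i
  have "(\<Sum>j<length ys. cs j * (\<Sum>t<length bs. (ys!j) t * (bs!t) i)) =
        (\<Sum>t<length bs. (\<Sum>j<length ys. cs j * (ys!j) t) * (bs!t) i)"
    by (simp add: sum_distrib_left sum_distrib_right mult.assoc) (rule sum.swap)
  then show "lin_comb (map (lin_comb bs) ys) cs i = lin_comb bs (lin_comb ys cs) i"
    by (simp add: lin_comb_def)
qed

lemma lin_comb_unit: "j < length vs \<Longrightarrow> lin_comb vs (\<lambda>i. if i = j then 1 else 0) = vs ! j"
proof (rule ext)
  fix x assume j: "j < length vs"
  have "\<And>l. (if l = j then 1 else 0) * (vs ! l) x = (if l = j then (vs ! l) x else 0)" by simp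
  then show "lin_comb vs (\<lambda>i. if i = j then 1 else 0) x = (vs ! j) x"
    unfolding lin_comb_def using j by (simp only:) simp
qed

lemma lin_comb_in_vecs: "set vs \<subseteq> vecs n \<Longrightarrow> lin_comb vs cs \<in> vecs n"
  unfolding vecs_def lin_comb_def
proof (clarsimp)
  fix i assume A: "set vs \<subseteq> {v. \<forall>i. n < i \<longrightarrow> v i = 0}" and i: "n < i"
  have "\<And>j. j < length vs \<Longrightarrow> (vs ! j) i = 0" using A i nth_mem by blast
  then show "(\<Sum>j<length vs. cs j * (vs ! j) i) = 0" by simp
qed

lemma span_l_add: "x \<in> span_l vs \<Longrightarrow> y \<in> span_l vs \<Longrightarrow> (\<lambda>i. x i + y i) \<in> span_l vs"
  unfolding span_l_def by (auto simp flip: lin_comb_add)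

lemma span_l_diff: "x \<in> span_l vs \<Longrightarrow> y \<in> span_l vs \<Longrightarrow> (\<lambda>i. x i - y i) \<in> span_l vs"
  unfolding span_l_def by (auto simp flip: lin_comb_diff)

lemma span_l_scale: "x \<in> span_l vs \<Longrightarrow> (\<lambda>i. c * x i) \<in> span_l vs"
  unfolding span_l_def by (auto simp flip: lin_comb_scale)

lemma span_l_zero: "(\<lambda>_. 0) \<in> span_l vs"
  unfolding span_l_def by (rule CollectI, rule exI[of _ "\<lambda>_. 0"]) (simp add: lin_comb_zero)

lemma span_l_base: "v \<in> set vs \<Longrightarrow> v \<in> span_l vs"
  unfolding span_l_def by (auto simp: in_set_conv_nth) (metis lin_comb_unit)

section \<open>Determinants\<close>

lemma det_l_eq_det: "det_l k M = det (mat k k (\<lambda>(i,j). M i j))"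
proof -
  have "det (mat k k (\<lambda>(i,j). M i j)) = (\<Sum>p\<in>{p. p permutes {0..<k}}. of_int (sign p) * (\<Prod>i=0..<k. mat k k (\<lambda>(i,j). M i j) $$ (i, p i)))"
    by (rule det_def') simp
  also have "\<dots> = det_l k M"
    unfolding det_l_def atLeast0LessThan
  proof (rule sum.cong[OF refl])
    fix p assume "p \<in> {p. p permutes {..<k}}"
    then have p: "p permutes {..<k}" by simp
    have "\<And>i. i \<in> {..<k} \<Longrightarrow> mat k k (\<lambda>(i,j). M i j) $$ (i, p i) = M i (p i)"
      using permutes_in_image[OF p] by simp
    then show "of_int (sign p) * (\<Prod>i\<in>{..<k}. mat k k (\<lambda>(i,j). M i j) $$ (i, p i)) =
      of_int (sign p) * (\<Prod>i\<in>{..<k}. M i (p i))" by simp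
  qed
  finally show ?thesis by simp
qed

lemma det_l_cong: "(\<And>i j. i < k \<Longrightarrow> j < k \<Longrightarrow> M i j = M' i j) \<Longrightarrow> det_l k M = det_l k M'"
  unfolding det_l_def
proof (rule sum.cong[OF refl])
  fix p assume eq: "\<And>i j. i < k \<Longrightarrow> j < k \<Longrightarrow> M i j = M' i j" and "p \<in> {p. p permutes {..<k}}"
  then have p: "p permutes {..<k}" by simp
  have "\<And>i. i \<in> {..<k} \<Longrightarrow> M i (p i) = M' i (p i)"
    using permutes_in_image[OF p] eq by simp
  then show "of_int (sign p) * (\<Prod>i<k. M i (p i)) = of_int (sign p) * (\<Prod>i<k. M' i (p i))"
    by simp
qed

lemma det_l_identical_rows:
  assumes "i \<noteq> j" "i < k" "j < k" "\<And>c. c < k \<Longrightarrow> M i c = M j c"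
  shows "det_l k M = 0"
proof -
  have "row (mat k k (\<lambda>(i,j). M i j)) i = row (mat k k (\<lambda>(i,j). M i j)) j"
    by (rule eq_vecI) (simp_all add: assms)
  then show ?thesis unfolding det_l_eq_det
    by (intro det_identical_rows[OF _ assms(1-3)]) simp_all
qed

lemma det_l_permute_rows:
  assumes "p permutes {..<k}"
  shows "det_l k (\<lambda>i j. M (p i) j) = of_int (sign p) * det_l k M"
proof -
  have p: "p permutes {0..<k}" using assms by (simp add: atLeast0LessThan)
  have "mat k k (\<lambda>(i,j). M (p i) j) = mat k k (\<lambda>(i,j). mat k k (\<lambda>(i,j). M i j) $$ (p i, j))"
  proof (rule eq_matI)
    fix i j assume "i < dim_row (mat k k (\<lambda>(i,j). mat k k (\<lambda>(i,j). M i j) $$ (p i, j)))"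
      "j < dim_col (mat k k (\<lambda>(i,j). mat k k (\<lambda>(i,j). M i j) $$ (p i, j)))"
    then have ij: "i < k" "j < k" by simp_all
    then have "p i < k" using permutes_in_image[OF assms] by simp
    then show "mat k k (\<lambda>(i,j). M (p i) j) $$ (i, j) = mat k k (\<lambda>(i,j). mat k k (\<lambda>(i,j). M i j) $$ (p i, j)) $$ (i, j)"
      using ij by simp
  qed simp_all
  then show ?thesis unfolding det_l_eq_det
    using det_permute_rows[OF _ p, of "mat k k (\<lambda>(i,j). M i j)"] by simp
qed

lemma det_l_mult:
  "det_l k (\<lambda>i j. \<Sum>l<k. A i l * B l j) = det_l k A * det_l k B"
proof -
  have "mat k k (\<lambda>(i,j). \<Sum>l<k. A i l * B l j) = mat k k (\<lambda>(i,j). A i j) * mat k k (\<lambda>(i,j). B i j)"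
  proof (rule eq_matI)
    fix i j assume "i < dim_row (mat k k (\<lambda>(i,j). A i j) * mat k k (\<lambda>(i,j). B i j))"
      "j < dim_col (mat k k (\<lambda>(i,j). A i j) * mat k k (\<lambda>(i,j). B i j))"
    then have ij: "i < k" "j < k" by simp_all
    have "(mat k k (\<lambda>(i,j). A i j) * mat k k (\<lambda>(i,j). B i j)) $$ (i,j)
       = (\<Sum>l=0..<k. A i l * B l j)"
      using ij by (simp add: scalar_prod_def)
    then show "mat k k (\<lambda>(i,j). \<Sum>l<k. A i l * B l j) $$ (i, j) = (mat k k (\<lambda>(i,j). A i j) * mat k k (\<lambda>(i,j). B i j)) $$ (i, j)"
      using ij by (simp add: atLeast0LessThan)
  qed simp_all
  then show ?thesis unfolding det_l_eq_det
    by (simp add: det_mult[of _ k])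
qed

lemma prod_lessThan_split:
  assumes "(q::nat) \<le> N"
  shows "(\<Prod>i<N. h i) = (\<Prod>i<q. h i) * (\<Prod>i\<in>{q..<N}. (h i :: 'b::comm_monoid_mult))"
proof -
  have "{..<N} = {..<q} \<union> {q..<N}" using assms by auto
  then show ?thesis by (simp add: prod.union_disjoint ivl_disj_int)
qed

lemma det_l_expand_rows:
  assumes qN: "q \<le> N" and fA: "finite A"
  shows "det_l N (\<lambda>i j. if i < q then (\<Sum>t\<in>A. a i t * R t j) else P i j)
    = (\<Sum>f\<in>PiE {..<q} (\<lambda>_. A). (\<Prod>i<q. a i (f i)) * det_l N (\<lambda>i j. if i < q then R (f i) j else P i j))"
    (is "det_l N ?M = (\<Sum>f\<in>?F. ?a f * det_l N (?Mf f))")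
proof -
  have expand: "(\<Prod>i<N. ?M i (p i)) = (\<Sum>f\<in>?F. ?a f * ((\<Prod>i<q. R (f i) (p i)) * (\<Prod>i\<in>{q..<N}. P i (p i))))" for p
  proof -
    have "(\<Prod>i<N. ?M i (p i)) = (\<Prod>i<q. ?M i (p i)) * (\<Prod>i\<in>{q..<N}. ?M i (p i))"
      by (rule prod_lessThan_split[OF qN])
    also have "(\<Prod>i<q. ?M i (p i)) = (\<Prod>i<q. \<Sum>t\<in>A. a i t * R t (p i))"
      by (rule prod.cong) simp_all
    also have "\<dots> = (\<Sum>f\<in>?F. \<Prod>i<q. a i (f i) * R (f i) (p i))"
      by (rule prod_sum_PiE) (simp_all add: fA)
    also have "(\<Prod>i\<in>{q..<N}. ?M i (p i)) = (\<Prod>i\<in>{q..<N}. P i (p i))"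
      by (rule prod.cong) simp_all
    finally show ?thesis
      by (simp add: prod.distrib sum_distrib_right mult.assoc)
  qed
  have split: "(\<Prod>i<N. ?Mf f i (p i)) = (\<Prod>i<q. R (f i) (p i)) * (\<Prod>i\<in>{q..<N}. P i (p i))" for f p
  proof -
    have "(\<Prod>i<N. ?Mf f i (p i)) = (\<Prod>i<q. ?Mf f i (p i)) * (\<Prod>i\<in>{q..<N}. ?Mf f i (p i))"
      by (rule prod_lessThan_split[OF qN])
    also have "(\<Prod>i<q. ?Mf f i (p i)) = (\<Prod>i<q. R (f i) (p i))"
      by (rule prod.cong) simp_all
    also have "(\<Prod>i\<in>{q..<N}. ?Mf f i (p i)) = (\<Prod>i\<in>{q..<N}. P i (p i))"
      by (rule prod.cong) simp_all
    finally show ?thesis .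
  qed
  have "det_l N ?M = (\<Sum>p\<in>{p. p permutes {..<N}}. \<Sum>f\<in>?F. ?a f * (of_int (sign p) * (\<Prod>i<N. ?Mf f i (p i))))"
    unfolding det_l_def expand split by (simp add: sum_distrib_left mult.left_commute)
  also have "\<dots> = (\<Sum>f\<in>?F. \<Sum>p\<in>{p. p permutes {..<N}}. ?a f * (of_int (sign p) * (\<Prod>i<N. ?Mf f i (p i))))"
    by (rule sum.swap)
  also have "\<dots> = (\<Sum>f\<in>?F. ?a f * det_l N (?Mf f))"
    unfolding det_l_def by (simp add: sum_distrib_left)
  finally show ?thesis .
qed

lemma det_l_permute_first_rows:
  assumes pq: "p permutes {..<q}" and "q \<le> N"
  shows "det_l N (\<lambda>i j. if i < q then R (g (p i)) j else P i j)
       = of_int (sign p) * det_l N (\<lambda>i j. if i < q then R (g i) j else P i j)"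
proof -
  have pN: "p permutes {..<N}" by (rule permutes_subset[OF pq]) (use assms(2) in auto)
  have "det_l N (\<lambda>i j. if i < q then R (g (p i)) j else P i j)
      = det_l N (\<lambda>i j. (\<lambda>i j. if i < q then R (g i) j else P i j) (p i) j)"
  proof (rule det_l_cong)
    fix i j
    show "(if i < q then R (g (p i)) j else P i j) = (if p i < q then R (g (p i)) j else P (p i) j)"
      using permutes_in_image[OF pq, of i] permutes_not_in[OF pq, of i] by auto
  qed
  also have "\<dots> = of_int (sign p) * det_l N (\<lambda>i j. if i < q then R (g i) j else P i j)"
    by (rule det_l_permute_rows[OF pN])
  finally show ?thesis .
qed

definition sc :: "'a::field \<Rightarrow> (nat \<Rightarrow> 'a) \<Rightarrow> (nat \<Rightarrow> 'a)" where "sc c v = (\<lambda>i. c * v i)"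

interpretation fv: vector_space "sc :: 'a::field \<Rightarrow> (nat \<Rightarrow> 'a) \<Rightarrow> (nat \<Rightarrow> 'a)"
  by unfold_locales (simp_all add: sc_def plus_fun_def fun_eq_iff distrib_left distrib_right)

lemma sum_fun_apply: "(\<Sum>x\<in>A. f x) i = (\<Sum>x\<in>A. f x i)"
  by (induct A rule: infinite_finite_induct) auto

lemma sum_sc_eq_lin_comb:
  assumes "distinct vs"
  shows "(\<Sum>x\<in>set vs. sc (u x) x) = lin_comb vs (\<lambda>j. u (vs!j))"
proof (rule ext)
  fix i
  have b: "bij_betw ((!) vs) {..<length vs} (set vs)" by (rule bij_betw_nth[OF assms]) simp_all
  have "(\<Sum>x\<in>set vs. sc (u x) x) i = (\<Sum>x\<in>set vs. u x * x i)"
    by (simp add: sum_fun_apply sc_def)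
  also have "\<dots> = (\<Sum>j<length vs. u (vs!j) * (vs!j) i)"
    by (rule sum.reindex_bij_betw[OF b, symmetric])
  finally show "(\<Sum>x\<in>set vs. sc (u x) x) i = lin_comb vs (\<lambda>j. u (vs!j)) i"
    by (simp add: lin_comb_def)
qed

lemma lin_comb_eq_sum_sc: "lin_comb vs cs = (\<Sum>j<length vs. sc (cs j) (vs!j))"
  by (simp add: fun_eq_iff sum_fun_apply sc_def lin_comb_def)

lemma span_l_eq_span: "span_l vs = fv.span (set vs)"
proof
  show "span_l vs \<subseteq> fv.span (set vs)"
  proof
    fix x assume "x \<in> span_l vs"
    then obtain cs where x: "x = lin_comb vs cs" by (auto simp: span_l_def)
    show "x \<in> fv.span (set vs)" unfolding x lin_comb_eq_sum_sc
      by (intro fv.span_sum fv.span_scale fv.span_base) simp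
  qed
  have "fv.subspace (span_l vs)"
    unfolding fv.subspace_def
    using span_l_zero[of vs] span_l_add[of _ vs] span_l_scale[of _ vs]
    by (auto simp: zero_fun_def plus_fun_def sc_def)
  then show "fv.span (set vs) \<subseteq> span_l vs"
    by (intro fv.span_minimal) (auto intro: span_l_base)
qed

lemma indep_distinct:
  assumes "indep vs" shows "distinct vs"
proof (rule ccontr)
  assume "\<not> distinct vs"
  then obtain i j where ij: "i < length vs" "j < length vs" "i \<noteq> j" "vs!i = vs!j"
    by (auto simp: distinct_conv_nth)
  let ?cs = "\<lambda>l. (if l = i then 1 else 0) - (if l = j then 1 else (0::'a))"
  have "lin_comb vs ?cs = (\<lambda>x. (vs!i) x - (vs!j) x)"
    using lin_comb_diff[of vs "\<lambda>l. if l = i then 1 else 0" "\<lambda>l. if l = j then 1 else 0"]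
      lin_comb_unit[OF ij(1)] lin_comb_unit[OF ij(2)] by simp
  also have "\<dots> = (\<lambda>_. 0)" using ij by simp
  finally have "?cs i = 0" using assms ij unfolding indep_def by blast
  then show False using ij by simp
qed

lemma indep_imp_independent:
  assumes "indep vs" shows "fv.independent (set vs)"
proof (rule fv.independent_if_scalars_zero)
  fix f x assume s: "(\<Sum>x\<in>set vs. sc (f x) x) = 0" and x: "x \<in> set vs"
  have "lin_comb vs (\<lambda>j. f (vs!j)) = (\<lambda>_. 0)"
    using s sum_sc_eq_lin_comb[OF indep_distinct[OF assms], of f] by (simp add: zero_fun_def)
  then have "\<forall>j<length vs. f (vs!j) = 0" using assms unfolding indep_def by blast
  then show "f x = 0" using x by (auto simp: in_set_conv_nth)
qed simp

lemma independent_imp_indep: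
  assumes d: "distinct vs" and ind: "fv.independent (set vs)" shows "indep vs"
  unfolding indep_def
proof (rule allI, rule impI)
  fix cs assume lc: "lin_comb vs cs = (\<lambda>_. 0)"
  let ?u = "\<lambda>x. cs (inv_into {..<length vs} ((!) vs) x)"
  have inj: "inj_on ((!) vs) {..<length vs}" using d by (simp add: inj_on_nth)
  have u: "?u (vs!j) = cs j" if "j < length vs" for j
    using inv_into_f_f[OF inj] that by simp
  have "lin_comb vs (\<lambda>j. ?u (vs!j)) = lin_comb vs cs"
    by (rule lin_comb_cong) (simp add: u)
  then have s0: "(\<Sum>x\<in>set vs. sc (?u x) x) = 0"
    using sum_sc_eq_lin_comb[OF d, of ?u] lc by (simp add: zero_fun_def)
  have scalars_zero: "\<And>S u. S \<subseteq> set vs \<Longrightarrow> finite S \<Longrightarrow> (\<Sum>v\<in>S. sc (u v) v) = 0 \<Longrightarrow> \<forall>v\<in>S. u v = 0"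
    using ind unfolding fv.independent_explicit_finite_subsets by blast
  have z: "\<forall>v\<in>set vs. ?u v = 0" by (rule scalars_zero[OF order_refl finite_set s0])
  show "\<forall>j<length vs. cs j = 0"
  proof (intro allI impI)
    fix j assume j: "j < length vs"
    then have "vs ! j \<in> set vs" by simp
    then show "cs j = 0" using z u[OF j] by simp
  qed
qed

lemma indep_length_le_span_l:
  assumes "indep vs" "set vs \<subseteq> span_l ws"
  shows "length vs \<le> length ws"
proof -
  have "card (set vs) \<le> card (set ws)"
    using fv.independent_span_bound[of "set ws" "set vs"] indep_imp_independent[OF assms(1)] assms(2)
    by (simp add: span_l_eq_span)
  also have "\<dots> \<le> length ws" by (rule card_length)
  finally show ?thesis using distinct_card[OF indep_distinct[OF assms(1)]] by simp
qed

lemma indep_span_l_eq_imp_length_eq: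
  assumes "indep vs" "indep ws" "span_l vs = span_l ws"
  shows "length vs = length ws"
  using indep_length_le_span_l[OF assms(1)] indep_length_le_span_l[OF assms(2)] assms(3) span_l_base
  by (metis le_antisym subsetI)

lemma vecs_subset_span_units: "vecs m \<subseteq> fv.span ((\<lambda>t. \<lambda>i. if i = t then (1::'a::field) else 0) ` {..m})"
proof
  fix v :: "nat \<Rightarrow> 'a" assume v: "v \<in> vecs m"
  have "v = (\<Sum>t\<in>{..m}. sc (v t) (\<lambda>i. if i = t then 1 else 0))"
  proof (rule ext)
    fix i
    have "(\<Sum>t\<in>{..m}. sc (v t) (\<lambda>i. if i = t then 1 else 0)) i = (\<Sum>t\<in>{..m}. if t = i then v i else 0)"
      unfolding sum_fun_apply sc_def by (rule sum.cong) auto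
    also have "\<dots> = v i" using v by (auto simp: vecs_def)
    finally show "v i = (\<Sum>t\<in>{..m}. sc (v t) (\<lambda>i. if i = t then 1 else 0)) i" by simp
  qed
  also have "\<dots> \<in> fv.span ((\<lambda>t. \<lambda>i. if i = t then (1::'a::field) else 0) ` {..m})"
    by (intro fv.span_sum fv.span_scale fv.span_base) simp
  finally show "v \<in> fv.span ((\<lambda>t. \<lambda>i. if i = t then (1::'a::field) else 0) ` {..m})" .
qed

lemma subspace_has_indep_basis:
  fixes Y :: "(nat \<Rightarrow> 'a::field) set"
  assumes sub: "fv.subspace Y" and Ym: "Y \<subseteq> vecs m"
  shows "\<exists>ys. indep ys \<and> set ys \<subseteq> Y \<and> span_l ys = Y"
proof -
  obtain B where B: "B \<subseteq> Y" "fv.independent B" "Y \<subseteq> fv.span B" "card B = fv.dim Y"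
    by (rule fv.basis_exists)
  define E where "E = (\<lambda>t. \<lambda>i. if i = t then (1::'a) else 0) ` {..m}"
  have "Y \<subseteq> fv.span E" unfolding E_def using Ym vecs_subset_span_units[of m] by (rule order.trans)
  then have BE: "B \<subseteq> fv.span E" using B(1) by (rule order.trans[rotated])
  have fE: "finite E" unfolding E_def by simp
  have "finite B" using fv.independent_span_bound[OF fE B(2) BE] by (rule conjunct1)
  then obtain ys where ys: "distinct ys" "set ys = B" using finite_distinct_list by blast
  have sp: "fv.span B = Y" by (rule fv.span_subspace[OF B(1) B(3) sub])
  have i: "indep ys" using independent_imp_indep[OF ys(1)] ys(2) B(2) by simp
  have s: "set ys \<subseteq> Y" using ys(2) B(1) by simp
  have e: "span_l ys = Y" using sp ys(2) by (simp add: span_l_eq_span)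
  show ?thesis using i s e by blast
qed

section \<open>Lifting subspaces of PG(m,F) into the interval [U,W]\<close>

lemma lift_span_l:
  "lift (span_l us) bs (span_l ys) = span_l (map (lin_comb bs) ys @ us)"
proof
  show "lift (span_l us) bs (span_l ys) \<subseteq> span_l (map (lin_comb bs) ys @ us)"
  proof
    fix z assume "z \<in> lift (span_l us) bs (span_l ys)"
    then obtain a b where z: "z = (\<lambda>i. lin_comb us a i + lin_comb bs (lin_comb ys b) i)"
      by (auto simp: lift_def span_l_def)
    let ?cs = "\<lambda>j. if j < length ys then b j else a (j - length ys)"
    have "lin_comb (map (lin_comb bs) ys @ us) ?cs = z"
      using lin_comb_append_join[of "map (lin_comb bs) ys" us b a]
      unfolding z length_map lin_comb_map_lin_comb by (simp add: add.commute)
    then show "z \<in> span_l (map (lin_comb bs) ys @ us)" unfolding span_l_def by blast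
  qed
  show "span_l (map (lin_comb bs) ys @ us) \<subseteq> lift (span_l us) bs (span_l ys)"
  proof
    fix z assume "z \<in> span_l (map (lin_comb bs) ys @ us)"
    then obtain cs where z: "z = lin_comb (map (lin_comb bs) ys @ us) cs" by (auto simp: span_l_def)
    have "z = (\<lambda>i. lin_comb us (\<lambda>j. cs (j + length ys)) i + lin_comb bs (lin_comb ys cs) i)"
      unfolding z lin_comb_append length_map lin_comb_map_lin_comb by (simp add: add.commute)
    moreover have "lin_comb us (\<lambda>j. cs (j + length ys)) \<in> span_l us" "lin_comb ys cs \<in> span_l ys"
      unfolding span_l_def by blast+
    ultimately show "z \<in> lift (span_l us) bs (span_l ys)" unfolding lift_def by blast
  qed
qed

lemma indep_append_lin_comb_eq_0:
  assumes "indep (us @ bs)" and "(\<lambda>i. lin_comb us a i + lin_comb bs y i) = (\<lambda>_. 0)"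
  shows "\<And>j. j < length us \<Longrightarrow> a j = 0" and "\<And>j. j < length bs \<Longrightarrow> y j = 0"
proof -
  define cc where "cc = (\<lambda>j. if j < length us then a j else y (j - length us))"
  have "lin_comb (us @ bs) cc = (\<lambda>_. 0)"
    unfolding cc_def lin_comb_append_join by (rule assms(2))
  then have cc0: "cc j = 0" if "j < length (us @ bs)" for j
    using assms(1) that unfolding indep_def by blast
  show "a j = 0" if "j < length us" for j using cc0[of j] that by (simp add: cc_def)
  show "y j = 0" if "j < length bs" for j using cc0[of "j + length us"] that by (simp add: cc_def)
qed

lemma indep_lift_basis:
  assumes ib: "indep (us @ bs)" and iy: "indep ys" and ym: "set ys \<subseteq> vecs m"
    and lb: "length bs = Suc m"
  shows "indep (map (lin_comb bs) ys @ us)"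
  unfolding indep_def
proof (intro allI impI)
  fix cs j assume lc: "lin_comb (map (lin_comb bs) ys @ us) cs = (\<lambda>_. 0)"
    and j: "j < length (map (lin_comb bs) ys @ us)"
  define y where "y = lin_comb ys cs"
  have "(\<lambda>i. lin_comb us (\<lambda>j. cs (j + length ys)) i + lin_comb bs y i) = (\<lambda>_. 0)"
    using lc unfolding lin_comb_append length_map lin_comb_map_lin_comb y_def by (simp add: add.commute)
  note coeffs_0 = indep_append_lin_comb_eq_0[OF ib this]
  have "y = (\<lambda>_. 0)"
  proof
    fix t
    have "y \<in> vecs m" unfolding y_def by (rule lin_comb_in_vecs[OF ym])
    then show "y t = 0" using coeffs_0(2)[of t] lb by (cases "t < length bs") (simp_all add: vecs_def)
  qed
  then have "\<forall>j<length ys. cs j = 0" using iy unfolding indep_def y_def by blast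
  then show "cs j = 0" using coeffs_0(1)[of "j - length ys"] j by (cases "j < length ys") simp_all
qed

lemma is_basis_lift:
  assumes "is_basis n us U" and "is_basis n (us @ bs) W" and "length bs = Suc m"
    and "is_basis m ys Y"
  shows "is_basis n (map (lin_comb bs) ys @ us) (lift U bs Y)"
proof -
  have us: "set us \<subseteq> vecs n" "U = span_l us" and bs: "set bs \<subseteq> vecs n" "indep (us @ bs)"
    and ys: "indep ys" "set ys \<subseteq> vecs m" "Y = span_l ys"
    using assms by (auto simp: is_basis_def)
  show ?thesis
    unfolding is_basis_def
  proof (intro conjI)
    show "set (map (lin_comb bs) ys @ us) \<subseteq> vecs n"
      using us(1) lin_comb_in_vecs[OF bs(1)] by auto
    show "indep (map (lin_comb bs) ys @ us)"
      by (rule indep_lift_basis[OF bs(2) ys(1,2) assms(3)])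
    show "lift U bs Y = span_l (map (lin_comb bs) ys @ us)"
      unfolding us(2) ys(3) by (rule lift_span_l)
  qed
qed

lemma subset_lift:
  assumes "(\<lambda>_. 0) \<in> Y"
  shows "U \<subseteq> lift U bs Y"
proof
  fix u assume "u \<in> U"
  moreover have "u = (\<lambda>i. u i + lin_comb bs (\<lambda>_. 0) i)" by (simp add: lin_comb_zero)
  ultimately show "u \<in> lift U bs Y" unfolding lift_def using assms by blast
qed

lemma lift_subset_span_l_append: "lift (span_l us) bs Y \<subseteq> span_l (us @ bs)"
  unfolding lift_def span_l_def by (auto simp flip: lin_comb_append_join)

lemma subspace_lin_comb_preimage:
  assumes "X = span_l xs"
  shows "fv.subspace {y \<in> vecs m. lin_comb bs y \<in> X}"
  unfolding fv.subspace_def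
proof (intro conjI ballI allI)
  show "0 \<in> {y \<in> vecs m. lin_comb bs y \<in> X}"
    using span_l_zero[of xs] lin_comb_zero[of bs] assms by (simp add: vecs_def zero_fun_def)
next
  fix x y assume "x \<in> {y \<in> vecs m. lin_comb bs y \<in> X}" "y \<in> {y \<in> vecs m. lin_comb bs y \<in> X}"
  then show "x + y \<in> {y \<in> vecs m. lin_comb bs y \<in> X}"
    using lin_comb_add[of bs x y] span_l_add[of _ xs] assms by (simp add: plus_fun_def vecs_def)
next
  fix c x assume "x \<in> {y \<in> vecs m. lin_comb bs y \<in> X}"
  then show "sc c x \<in> {y \<in> vecs m. lin_comb bs y \<in> X}"
    using lin_comb_scale[of bs c x] span_l_scale[of _ xs] assms by (simp add: sc_def vecs_def)
qed

lemma mem_interval_imp_lift: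
  assumes U: "U = span_l us" and W: "W = span_l (us @ bs)" and lb: "length bs = Suc m"
    and X: "X = span_l xs" and UX: "U \<subseteq> X" and XW: "X \<subseteq> W"
  obtains ys Y where "is_basis m ys Y" and "X = lift U bs Y"
proof -
  define Y where "Y = {y \<in> vecs m. lin_comb bs y \<in> X}"
  have "fv.subspace Y" unfolding Y_def by (rule subspace_lin_comb_preimage[OF X])
  moreover have "Y \<subseteq> vecs m" by (auto simp: Y_def)
  ultimately obtain ys where ys: "indep ys" "set ys \<subseteq> Y" "span_l ys = Y"
    using subspace_has_indep_basis by blast
  have "is_basis m ys Y" using ys by (auto simp: is_basis_def Y_def)
  moreover have "X = lift U bs Y"
  proof
    show "X \<subseteq> lift U bs Y"
    proof
      fix x assume xX: "x \<in> X"
      then obtain cs where x: "x = lin_comb (us @ bs) cs"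
        using XW W by (auto simp: span_l_def)
      define y where "y = (\<lambda>t. if t \<le> m then cs (t + length us) else 0)"
      define u where "u = lin_comb us cs"
      have "lin_comb bs y = lin_comb bs (\<lambda>j. cs (j + length us))"
        by (rule lin_comb_cong) (simp add: y_def lb)
      then have xu: "x = (\<lambda>i. u i + lin_comb bs y i)"
        unfolding x lin_comb_append u_def by simp
      have uU: "u \<in> U" unfolding U u_def span_l_def by blast
      then have "(\<lambda>i. x i - u i) \<in> X" using xX UX X span_l_diff by blast
      then have "y \<in> Y" by (simp add: xu Y_def y_def vecs_def)
      then show "x \<in> lift U bs Y" unfolding lift_def using uU xu by blast
    qed
    show "lift U bs Y \<subseteq> X"
    proof
      fix z assume "z \<in> lift U bs Y"
      then obtain u y where "z = (\<lambda>i. u i + lin_comb bs y i)" "u \<in> U" "y \<in> Y"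
        by (auto simp: lift_def)
      then show "z \<in> X" using UX X span_l_add by (auto simp: Y_def)
    qed
  qed
  ultimately show ?thesis by (rule that)
qed

section \<open>Pluecker coordinates\<close>

lemma plucker_coord_change_basis:
  assumes "length vs' = length vs" and "set vs' \<subseteq> span_l vs"
  obtains \<delta> where "\<And>S. plucker_coord vs' S = \<delta> * plucker_coord vs S"
proof -
  let ?r = "length vs"
  have "\<forall>i<?r. \<exists>cs. vs' ! i = lin_comb vs cs"
  proof (intro allI impI)
    fix i assume "i < ?r"
    then have "vs' ! i \<in> span_l vs" using assms nth_mem by (metis subsetD)
    then show "\<exists>cs. vs' ! i = lin_comb vs cs" by (auto simp: span_l_def)
  qed
  then obtain A where A: "\<And>i. i < ?r \<Longrightarrow> vs' ! i = lin_comb vs (A i)" by metis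
  have "plucker_coord vs' S = det_l ?r A * plucker_coord vs S" for S
  proof -
    have "plucker_coord vs' S = det_l ?r (\<lambda>i j. \<Sum>l<?r. A i l * (vs ! l) (sorted_list_of_set S ! j))"
      unfolding plucker_coord_def assms(1) by (rule det_l_cong) (simp add: A lin_comb_def)
    then show ?thesis unfolding det_l_mult plucker_coord_def .
  qed
  then show ?thesis by (rule that)
qed

lemma sorted_list_of_set_permute:
  assumes T: "finite T" "card T = q" and pq: "p permutes {..<q}"
  shows "inj_on (\<lambda>i. sorted_list_of_set T ! p i) {..<q}"
    and "(\<lambda>i. sorted_list_of_set T ! p i) ` {..<q} = T"
proof -
  let ?t = "sorted_list_of_set T"
  have t: "distinct ?t" "set ?t = T" "length ?t = q" using T by simp_all
  have "inj_on ((!) ?t) (p ` {..<q})" using t by (simp add: permutes_image[OF pq] inj_on_nth)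
  then show "inj_on (\<lambda>i. ?t ! p i) {..<q}"
    using comp_inj_on[OF permutes_inj_on[OF pq]] by (simp add: comp_def)
  have "(\<lambda>i. ?t ! p i) ` {..<q} = (!) ?t ` {..<q}"
    by (simp add: image_image[symmetric] permutes_image[OF pq])
  also have "\<dots> = T" using t by (auto simp: set_conv_nth)
  finally show "(\<lambda>i. ?t ! p i) ` {..<q} = T" .
qed

lemma sorted_list_of_set_permute_inject:
  assumes T: "finite T" "card T = q" "p permutes {..<q}"
    and T': "finite T'" "card T' = q" "p' permutes {..<q}"
    and eq: "\<And>i. i < q \<Longrightarrow> sorted_list_of_set T ! p i = sorted_list_of_set T' ! p' i"
  shows "T = T'" and "p = p'"
proof -
  have "T = (\<lambda>i. sorted_list_of_set T ! p i) ` {..<q}" using sorted_list_of_set_permute(2)[OF T] by simp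
  also have "\<dots> = (\<lambda>i. sorted_list_of_set T' ! p' i) ` {..<q}" by (intro image_cong) (simp_all add: eq)
  also have "\<dots> = T'" using sorted_list_of_set_permute(2)[OF T'] .
  finally show "T = T'" .
  show "p = p'"
  proof
    fix i
    show "p i = p' i"
    proof (cases "i < q")
      case True
      have "inj_on ((!) (sorted_list_of_set T)) {..<q}" using T by (simp add: inj_on_nth)
      then show ?thesis
        using eq[OF True] \<open>T = T'\<close> True permutes_in_image[OF T(3)] permutes_in_image[OF T'(3)]
        by (auto simp: inj_on_def)
    next
      case False
      then show ?thesis using permutes_not_in[OF T(3)] permutes_not_in[OF T'(3)] by simp
    qed
  qed
qed

lemma inj_on_eq_sorted_list_of_set_permute:
  assumes inj: "inj_on f {..<q}"
  obtains p where "p permutes {..<q}"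
    and "\<And>i. i < q \<Longrightarrow> f i = sorted_list_of_set (f ` {..<q}) ! p i"
proof -
  define t where "t = sorted_list_of_set (f ` {..<q})"
  have bt: "bij_betw ((!) t) {..<q} (f ` {..<q})"
    using card_image[OF inj] by (intro bij_betw_nth) (simp_all add: t_def)
  define p where "p = (\<lambda>i. if i < q then inv_into {..<q} ((!) t) (f i) else i)"
  have "bij_betw (inv_into {..<q} ((!) t) \<circ> f) {..<q} {..<q}"
    using inj by (intro bij_betw_trans[OF _ bij_betw_inv_into[OF bt]]) (simp add: bij_betw_def)
  then have "bij_betw p {..<q} {..<q}"
    by (rule bij_betw_cong[THEN iffD1, rotated]) (simp add: p_def)
  then have "p permutes {..<q}" by (rule bij_imp_permutes) (simp add: p_def)
  moreover have "f i = t ! p i" if "i < q" for i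
  proof -
    have "f i \<in> (!) t ` {..<q}" using bt that by (auto simp: bij_betw_def)
    then show ?thesis using that by (simp add: p_def f_inv_into_f)
  qed
  ultimately show ?thesis unfolding t_def by (rule that)
qed

lemma bij_betw_subsets_perms_injections:
  fixes q B :: nat
  shows "bij_betw (\<lambda>(T, p). restrict (\<lambda>i. sorted_list_of_set T ! p i) {..<q})
     (SIGMA T:{T. T \<subseteq> {..<B} \<and> card T = q}. {p. p permutes {..<q}})
     {f \<in> PiE {..<q} (\<lambda>_. {..<B}). inj_on f {..<q}}"
  (is "bij_betw ?h ?A ?I")
proof -
  have fin: "finite T" if "T \<subseteq> {..<B}" for T using that by (rule finite_subset) simp
  note props = sorted_list_of_set_permute[OF fin]
  have "inj_on ?h ?A"
  proof (rule inj_onI)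
    fix x y assume "x \<in> ?A" "y \<in> ?A" and eq: "?h x = ?h y"
    moreover obtain T p T' p' where xy: "x = (T, p)" "y = (T', p')" by fastforce
    ultimately have A: "T \<subseteq> {..<B}" "card T = q" "p permutes {..<q}"
      "T' \<subseteq> {..<B}" "card T' = q" "p' permutes {..<q}"
      by auto
    have "sorted_list_of_set T ! p i = sorted_list_of_set T' ! p' i" if "i < q" for i
      using fun_cong[OF eq, of i] that xy by simp
    then have "T = T'" "p = p'"
      using sorted_list_of_set_permute_inject[OF fin[OF A(1)] A(2,3) fin[OF A(4)] A(5,6)] by blast+
    then show "x = y" using xy by simp
  qed
  moreover have "?h ` ?A \<subseteq> ?I"
  proof
    fix g assume "g \<in> ?h ` ?A"
    then obtain T p where A: "T \<subseteq> {..<B}" "card T = q" "p permutes {..<q}" and g: "g = ?h (T, p)"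
      by auto
    have "inj_on (?h (T, p)) {..<q}"
      using props(1)[OF A] by (rule inj_on_cong[THEN iffD1, rotated]) simp
    moreover have "?h (T, p) \<in> PiE {..<q} (\<lambda>_. {..<B})"
      using props(2)[OF A] A(1) by auto
    ultimately show "g \<in> ?I" using g by simp
  qed
  moreover have "?I \<subseteq> ?h ` ?A"
  proof
    fix f assume "f \<in> ?I"
    then have fF: "f \<in> PiE {..<q} (\<lambda>_. {..<B})" and inj: "inj_on f {..<q}" by auto
    obtain p where p: "p permutes {..<q}" "\<And>i. i < q \<Longrightarrow> f i = sorted_list_of_set (f ` {..<q}) ! p i"
      using inj_on_eq_sorted_list_of_set_permute[OF inj] by blast
    define T where "T = f ` {..<q}"
    have fp: "f i = sorted_list_of_set T ! p i" if "i < q" for i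
      unfolding T_def using that by (rule p(2))
    have "f = ?h (T, p)"
    proof
      fix i
      show "f i = ?h (T, p) i"
        using fp[of i] fF by (cases "i < q") (simp_all add: PiE_def extensional_def)
    qed
    moreover have "T \<subseteq> {..<B}" "card T = q"
      using fF card_image[OF inj] by (auto simp: T_def)
    ultimately show "f \<in> ?h ` ?A" using p(1) by auto
  qed
  ultimately show ?thesis by (auto simp: bij_betw_def)
qed

text \<open>Cauchy--Binet: of the multilinear expansion of the first q rows only injective choices of
  row indices survive, and grouping them by their image T collects the q x q minors of a.\<close>

lemma sum_PiE_det_l_eq_sum_subsets:
  fixes B :: nat
  assumes "q \<le> N"
  shows "(\<Sum>f\<in>PiE {..<q} (\<lambda>_. {..<B}).
            (\<Prod>i<q. a i (f i)) * det_l N (\<lambda>i j. if i < q then R (f i) j else P i j))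
       = (\<Sum>T\<in>{T. T \<subseteq> {..<B} \<and> card T = q}.
            det_l q (\<lambda>i j. a i (sorted_list_of_set T ! j)) *
            det_l N (\<lambda>i j. if i < q then R (sorted_list_of_set T ! i) j else P i j))"
proof -
  let ?F = "PiE {..<q} (\<lambda>_. {..<B})" and ?Ts = "{T. T \<subseteq> {..<B} \<and> card T = q}"
  let ?I = "{f \<in> ?F. inj_on f {..<q}}" and ?Ps = "{p. p permutes {..<q}}"
  let ?D = "\<lambda>g. det_l N (\<lambda>i j. if i < q then R (g i) j else P i j)"
  let ?G = "\<lambda>f. (\<Prod>i<q. a i (f i)) * ?D f"
  let ?r = "\<lambda>T p. restrict (\<lambda>i. sorted_list_of_set T ! p i) {..<q}"
  have "(\<Sum>f\<in>?F. ?G f) = (\<Sum>f\<in>?I. ?G f)"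
  proof (rule sum.mono_neutral_right)
    show "\<forall>f\<in>?F - ?I. ?G f = 0"
    proof
      fix f assume "f \<in> ?F - ?I"
      then obtain i j where ij: "i < q" "j < q" "i \<noteq> j" "f i = f j" by (auto simp: inj_on_def)
      have "?D f = 0" by (rule det_l_identical_rows[of i j]) (use ij assms in auto)
      then show "?G f = 0" by simp
    qed
  qed (auto intro: finite_PiE)
  also have "\<dots> = (\<Sum>x\<in>Sigma ?Ts (\<lambda>_. ?Ps). ?G ((\<lambda>(T, p). ?r T p) x))"
    by (rule sum.reindex_bij_betw[OF bij_betw_subsets_perms_injections, symmetric])
  also have "\<dots> = (\<Sum>(T, p)\<in>Sigma ?Ts (\<lambda>_. ?Ps). ?G (?r T p))"
    by (rule sum.cong) auto
  also have "\<dots> = (\<Sum>T\<in>?Ts. \<Sum>p\<in>?Ps. ?G (?r T p))"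
  proof (rule sum.Sigma[symmetric])
    show "finite ?Ts" by (rule finite_subset[of _ "Pow {..<B}"]) auto
  qed (simp add: finite_permutations)
  also have "\<dots> = (\<Sum>T\<in>?Ts. det_l q (\<lambda>i j. a i (sorted_list_of_set T ! j)) * ?D ((!) (sorted_list_of_set T)))"
  proof (rule sum.cong[OF refl])
    fix T :: "nat set"
    let ?t = "sorted_list_of_set T"
    have "?G (?r T p) = of_int (sign p) * (\<Prod>i<q. a i (?t ! p i)) * ?D ((!) ?t)"
      if "p \<in> ?Ps" for p
    proof -
      have "?D (?r T p) = ?D (\<lambda>i. ?t ! p i)" by (rule det_l_cong) simp
      also have "\<dots> = of_int (sign p) * ?D ((!) ?t)"
        using det_l_permute_first_rows[of p q N R "(!) ?t" P] that assms by simp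
      finally show ?thesis by simp
    qed
    then have "(\<Sum>p\<in>?Ps. ?G (?r T p))
        = (\<Sum>p\<in>?Ps. of_int (sign p) * (\<Prod>i<q. a i (?t ! p i)) * ?D ((!) ?t))"
      by (rule sum.cong[OF refl])
    also have "\<dots> = (\<Sum>p\<in>?Ps. of_int (sign p) * (\<Prod>i<q. a i (?t ! p i))) * ?D ((!) ?t)"
      by (rule sum_distrib_right[symmetric])
    finally show "(\<Sum>p\<in>?Ps. ?G (?r T p)) = det_l q (\<lambda>i j. a i (?t ! j)) * ?D ((!) ?t)"
      by (simp only: det_l_def)
  qed
  finally show ?thesis .
qed

lemma plucker_coord_lift_expand:
  "plucker_coord (map (lin_comb bs) ys @ us) S =
    (\<Sum>T\<in>{T. T \<subseteq> {..<length bs} \<and> card T = length ys}.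
       plucker_coord ys T * plucker_coord (map ((!) bs) (sorted_list_of_set T) @ us) S)"
proof -
  let ?q = "length ys" and ?N = "length ys + length us" and ?g = "(!) (sorted_list_of_set S)"
  let ?P = "\<lambda>i j. (us ! (i - ?q)) (?g j)"
  have "plucker_coord (map (lin_comb bs) ys @ us) S
      = det_l ?N (\<lambda>i j. if i < ?q then (\<Sum>t\<in>{..<length bs}. (ys!i) t * (bs!t) (?g j)) else ?P i j)"
    unfolding plucker_coord_def length_append length_map
    by (rule det_l_cong) (simp add: nth_append lin_comb_def)
  also have "\<dots> = (\<Sum>f\<in>PiE {..<?q} (\<lambda>_. {..<length bs}). (\<Prod>i<?q. (ys!i) (f i)) *
         det_l ?N (\<lambda>i j. if i < ?q then (bs ! f i) (?g j) else ?P i j))"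
    by (rule det_l_expand_rows) simp_all
  also have "\<dots> = (\<Sum>T\<in>{T. T \<subseteq> {..<length bs} \<and> card T = ?q}.
        det_l ?q (\<lambda>i j. (ys!i) (sorted_list_of_set T ! j)) *
        det_l ?N (\<lambda>i j. if i < ?q then (bs ! (sorted_list_of_set T ! i)) (?g j) else ?P i j))"
    by (rule sum_PiE_det_l_eq_sum_subsets) simp
  also have "\<dots> = (\<Sum>T\<in>{T. T \<subseteq> {..<length bs} \<and> card T = ?q}.
       plucker_coord ys T * plucker_coord (map ((!) bs) (sorted_list_of_set T) @ us) S)"
  proof (rule sum.cong[OF refl])
    fix T assume T: "T \<in> {T. T \<subseteq> {..<length bs} \<and> card T = ?q}"
    then have lT: "length (sorted_list_of_set T) = ?q" by (auto intro: finite_subset)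
    have "det_l ?N (\<lambda>i j. if i < ?q then (bs ! (sorted_list_of_set T ! i)) (?g j) else ?P i j)
        = plucker_coord (map ((!) bs) (sorted_list_of_set T) @ us) S"
      unfolding plucker_coord_def length_append length_map lT
      by (rule det_l_cong) (use T in \<open>simp add: nth_append\<close>)
    then show "det_l ?q (\<lambda>i j. (ys!i) (sorted_list_of_set T ! j)) *
        det_l ?N (\<lambda>i j. if i < ?q then (bs ! (sorted_list_of_set T ! i)) (?g j) else ?P i j)
      = plucker_coord ys T * plucker_coord (map ((!) bs) (sorted_list_of_set T) @ us) S"
      by (simp add: plucker_coord_def)
  qed
  finally show ?thesis .
qed

section \<open>Restricting a linear complex to an interval\<close>

definition plucker_form :: "nat \<Rightarrow> nat \<Rightarrow> (nat set \<Rightarrow> 'a::field) \<Rightarrow> (nat \<Rightarrow> 'a) list \<Rightarrow> 'a" where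
  "plucker_form n k c vs = (\<Sum>S\<in>{S. S \<subseteq> {..n} \<and> card S = k}. c S * plucker_coord vs S)"

definition complex_of :: "nat \<Rightarrow> nat \<Rightarrow> (nat set \<Rightarrow> 'a::field) \<Rightarrow> (nat \<Rightarrow> 'a) set set" where
  "complex_of n h c = {X. psub n (int h) X \<and>
     (\<exists>vs. length vs = h + 1 \<and> is_basis n vs X \<and> plucker_form n (h + 1) c vs = 0)}"

text \<open>Coordinate T of the pulled-back hyperplane: the value of K's form on U + span of the
  basis vectors of W indexed by T.\<close>

definition pullback_coeffs ::
    "nat \<Rightarrow> nat \<Rightarrow> (nat set \<Rightarrow> 'a::field) \<Rightarrow> (nat \<Rightarrow> 'a) list \<Rightarrow> (nat \<Rightarrow> 'a) list \<Rightarrow> nat set \<Rightarrow> 'a" where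
  "pullback_coeffs n h c bs us T = plucker_form n (h + 1) c (map ((!) bs) (sorted_list_of_set T) @ us)"

lemma linear_complex_iff_complex_of:
  "linear_complex n h K \<longleftrightarrow>
     (\<exists>c. (\<exists>S. S \<subseteq> {..n} \<and> card S = h + 1 \<and> c S \<noteq> 0) \<and> K = complex_of n h c)"
  unfolding linear_complex_def complex_of_def plucker_form_def ..

lemma psub_nat_iff: "psub n (int k) X \<longleftrightarrow> (\<exists>vs. length vs = k + 1 \<and> is_basis n vs X)"
  by (simp add: psub_def nat_add_distrib)

lemma psub_basis_length:
  assumes "psub n u U" and "is_basis n us U"
  shows "int (length us) = u + 1"
proof -
  obtain us' where "length us' = nat (u + 1)" "is_basis n us' U" and "u \<ge> -1"
    using assms(1) unfolding psub_def by blast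
  then show ?thesis
    using assms(2) indep_span_l_eq_imp_length_eq[of us us'] by (simp add: is_basis_def)
qed

lemma mem_complex_of_iff:
  assumes vs: "is_basis n vs X" "length vs = h + 1"
  shows "X \<in> complex_of n h c \<longleftrightarrow> plucker_form n (h + 1) c vs = 0"
proof
  assume "X \<in> complex_of n h c"
  then obtain ws where ws: "length ws = h + 1" "is_basis n ws X" "plucker_form n (h + 1) c ws = 0"
    by (auto simp: complex_of_def)
  have "set vs \<subseteq> span_l ws" using vs(1) ws(2) by (metis is_basis_def span_l_base subsetI)
  then obtain \<delta> where "\<And>S. plucker_coord vs S = \<delta> * plucker_coord ws S"
    using plucker_coord_change_basis vs(2) ws(1) by metis
  then have "plucker_form n (h + 1) c vs = \<delta> * plucker_form n (h + 1) c ws"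
    by (simp add: plucker_form_def sum_distrib_left mult_ac)
  then show "plucker_form n (h + 1) c vs = 0" using ws(3) by simp
next
  assume "plucker_form n (h + 1) c vs = 0"
  then show "X \<in> complex_of n h c" using vs by (auto simp: complex_of_def psub_nat_iff)
qed

lemma plucker_form_lift:
  assumes "length bs = Suc m"
  shows "plucker_form n (h + 1) c (map (lin_comb bs) ys @ us)
       = plucker_form m (length ys) (pullback_coeffs n h c bs us) ys"
proof -
  let ?Sn = "{S. S \<subseteq> {..n} \<and> card S = h + 1}" and ?Tm = "{T. T \<subseteq> {..m} \<and> card T = length ys}"
  let ?b = "\<lambda>T. map ((!) bs) (sorted_list_of_set T) @ us"
  have "plucker_form n (h + 1) c (map (lin_comb bs) ys @ us)
      = (\<Sum>S\<in>?Sn. \<Sum>T\<in>?Tm. c S * (plucker_coord ys T * plucker_coord (?b T) S))"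
    unfolding plucker_form_def plucker_coord_lift_expand assms lessThan_Suc_atMost
    by (simp add: sum_distrib_left)
  also have "\<dots> = (\<Sum>T\<in>?Tm. \<Sum>S\<in>?Sn. c S * (plucker_coord ys T * plucker_coord (?b T) S))"
    by (rule sum.swap)
  also have "\<dots> = plucker_form m (length ys) (pullback_coeffs n h c bs us) ys"
    unfolding plucker_form_def pullback_coeffs_def
    by (simp add: sum_distrib_left sum_distrib_right mult_ac)
  finally show ?thesis .
qed

context
  fixes n h m d :: nat and U W :: "(nat \<Rightarrow> 'a::field) set" and us bs :: "(nat \<Rightarrow> 'a) list"
  assumes Ub: "is_basis n us U" and Wb: "is_basis n (us @ bs) W" and lb: "length bs = Suc m"
    and dim: "d + 1 + length us = h + 1"
begin

lemma lift_mem_complex_of_iff: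
  assumes "psub m (int d) Y"
  shows "lift U bs Y \<in> complex_of n h c \<longleftrightarrow> Y \<in> complex_of m d (pullback_coeffs n h c bs us)"
proof -
  obtain ys where ys: "length ys = d + 1" "is_basis m ys Y" using assms by (auto simp: psub_nat_iff)
  have "is_basis n (map (lin_comb bs) ys @ us) (lift U bs Y)"
    by (rule is_basis_lift[OF Ub Wb lb ys(2)])
  moreover have "length (map (lin_comb bs) ys @ us) = h + 1" using ys(1) dim by simp
  ultimately have "lift U bs Y \<in> complex_of n h c \<longleftrightarrow>
      plucker_form n (h + 1) c (map (lin_comb bs) ys @ us) = 0"
    by (rule mem_complex_of_iff)
  also have "\<dots> \<longleftrightarrow> plucker_form m (d + 1) (pullback_coeffs n h c bs us) ys = 0"
    using plucker_form_lift[OF lb] ys(1) by simp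
  also have "\<dots> \<longleftrightarrow> Y \<in> complex_of m d (pullback_coeffs n h c bs us)"
    using mem_complex_of_iff[OF ys(2,1)] by simp
  finally show ?thesis .
qed

lemma interval_eq_lift_image: "interval n (int h) U W = lift U bs ` {Y. psub m (int d) Y}"
proof
  have U: "U = span_l us" and W: "W = span_l (us @ bs)"
    using Ub Wb by (auto simp: is_basis_def)
  show "interval n (int h) U W \<subseteq> lift U bs ` {Y. psub m (int d) Y}"
  proof
    fix X assume "X \<in> interval n (int h) U W"
    then obtain xs where xs: "length xs = h + 1" "is_basis n xs X" and UX: "U \<subseteq> X" and XW: "X \<subseteq> W"
      by (auto simp: interval_def psub_nat_iff)
    obtain ys Y where ys: "is_basis m ys Y" and X: "X = lift U bs Y"
      using mem_interval_imp_lift[OF U W lb _ UX XW] xs(2) by (auto simp: is_basis_def)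
    have "is_basis n (map (lin_comb bs) ys @ us) X"
      unfolding X by (rule is_basis_lift[OF Ub Wb lb ys])
    then have "length xs = length (map (lin_comb bs) ys @ us)"
      using xs(2) by (intro indep_span_l_eq_imp_length_eq) (auto simp: is_basis_def)
    then have "psub m (int d) Y" using ys xs(1) dim by (auto simp: psub_nat_iff)
    then show "X \<in> lift U bs ` {Y. psub m (int d) Y}" using X by blast
  qed
  show "lift U bs ` {Y. psub m (int d) Y} \<subseteq> interval n (int h) U W"
  proof clarify
    fix Y :: "(nat \<Rightarrow> 'a) set" assume "psub m (int d) Y"
    then obtain ys where ys: "length ys = d + 1" "is_basis m ys Y" by (auto simp: psub_nat_iff)
    have "psub n (int h) (lift U bs Y)"
      unfolding psub_nat_iff using is_basis_lift[OF Ub Wb lb ys(2)] ys(1) dim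
      by (intro exI[of _ "map (lin_comb bs) ys @ us"]) simp
    moreover have "U \<subseteq> lift U bs Y"
      using ys(2) span_l_zero by (intro subset_lift) (simp add: is_basis_def)
    moreover have "lift U bs Y \<subseteq> W"
      using U W lift_subset_span_l_append by blast
    ultimately show "lift U bs Y \<in> interval n (int h) U W" by (simp add: interval_def)
  qed
qed

lemma complex_of_inter_interval_eq_lift:
  "complex_of n h c \<inter> interval n (int h) U W = lift U bs ` complex_of m d (pullback_coeffs n h c bs us)"
  unfolding interval_eq_lift_image
proof (intro equalityI subsetI)
  fix X assume "X \<in> complex_of n h c \<inter> lift U bs ` {Y. psub m (int d) Y}"
  then obtain Y where "psub m (int d) Y" "X = lift U bs Y" "X \<in> complex_of n h c" by auto
  then show "X \<in> lift U bs ` complex_of m d (pullback_coeffs n h c bs us)"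
    using lift_mem_complex_of_iff by blast
next
  fix X assume "X \<in> lift U bs ` complex_of m d (pullback_coeffs n h c bs us)"
  then obtain Y where Y: "Y \<in> complex_of m d (pullback_coeffs n h c bs us)" "X = lift U bs Y"
    by auto
  then have "psub m (int d) Y" by (simp add: complex_of_def)
  then show "X \<in> complex_of n h c \<inter> lift U bs ` {Y. psub m (int d) Y}"
    using Y lift_mem_complex_of_iff by blast
qed

lemma pullback_coeffs_nonzero:
  assumes "\<not> interval n (int h) U W \<subseteq> complex_of n h c"
  shows "\<exists>T. T \<subseteq> {..m} \<and> card T = d + 1 \<and> pullback_coeffs n h c bs us T \<noteq> 0"
proof (rule ccontr)
  assume "\<not> ?thesis"
  then have "plucker_form m (d + 1) (pullback_coeffs n h c bs us) ys = 0" for ys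
    by (simp add: plucker_form_def)
  then have "{Y. psub m (int d) Y} \<subseteq> complex_of m d (pullback_coeffs n h c bs us)"
    using mem_complex_of_iff by (fastforce simp: psub_nat_iff)
  then have "interval n (int h) U W \<subseteq> lift U bs ` complex_of m d (pullback_coeffs n h c bs us)"
    unfolding interval_eq_lift_image by (rule image_mono)
  then show False using assms complex_of_inter_interval_eq_lift by blast
qed

end

theorem proposition5p2:
  fixes n h :: nat and u w :: int
    and K :: "(nat \<Rightarrow> 'a::field) set set"
    and U W :: "(nat \<Rightarrow> 'a) set"
  assumes "1 \<le> h" and "h \<le> n - 1"
    and "linear_complex n h K"
    and "psub n u U" and "psub n w W" and "U \<subseteq> W"
    and "u \<le> int h - 1" and "w \<ge> int h + 1"
    and "\<not> interval n (int h) U W \<subseteq> K"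
  shows "linear_complex_in n U W (nat (int h - 1 - u)) (K \<inter> interval n (int h) U W)"
  unfolding linear_complex_in_def
proof (intro allI impI)
  fix bs assume "ident_ok n U W bs"
  then obtain us where "bs \<noteq> []" and Ub: "is_basis n us U" and Wb: "is_basis n (us @ bs) W"
    unfolding ident_ok_def by blast
  then have lb: "length bs = Suc (length bs - 1)" by simp
  have dim: "nat (int h - 1 - u) + 1 + length us = h + 1"
    using psub_basis_length[OF assms(4) Ub] assms(7) by simp
  obtain c where K: "K = complex_of n h c"
    using assms(3) by (auto simp: linear_complex_iff_complex_of)
  let ?L = "complex_of (length bs - 1) (nat (int h - 1 - u)) (pullback_coeffs n h c bs us)"
  show "\<exists>L. linear_complex (length bs - 1) (nat (int h - 1 - u)) L \<and>
          K \<inter> interval n (int h) U W = lift U bs ` L"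
  proof (intro exI conjI)
    show "linear_complex (length bs - 1) (nat (int h - 1 - u)) ?L"
      unfolding linear_complex_iff_complex_of
      using pullback_coeffs_nonzero[OF Ub Wb lb dim] assms(9) K by blast
    show "K \<inter> interval n (int h) U W = lift U bs ` ?L"
      unfolding K by (rule complex_of_inter_interval_eq_lift[OF Ub Wb lb dim])
  qed
qed

end
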